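(* There is the following behaviour of the Wainwright–Hsu flow $\Phi$: for every $\epsilon>0$ there exist a Bianchi VIII point $y_\epsilon\in\mathbb{R}^5$ satisfying the constraint, whose Euclidean distance in $\mathbb{R}^5$ to the Kasner circle is less than $\epsilon$, and a real number $T_\epsilon>0$, such that $\Phi(-T_\epsilon,y_\epsilon)=(\Sigma_+,\Sigma_-,N_1,N_2,N_3)$ is a Bianchi VIII point with $|N_1N_2|+|N_2N_3|+|N_3N_1|\geq\frac14$.
   Context: Wainwright–Hsu system: for functions $N_1,N_2,N_3,\Sigma_+,\Sigma_-$ of $\tau\in\mathbb{R}$ (prime denotes $d/d\tau$), $N_1'=(q-4\Sigma_+)N_1$, $N_2'=(q+2\Sigma_++2\sqrt3\Sigma_-)N_2$, $N_3'=(q+2\Sigma_+-2\sqrt3\Sigma_-)N_3$, $\Sigma_+'=-(2-q)\Sigma_+-3S_+$, $\Sigma_-'=-(2-q)\Sigma_--3S_-$, where $q=2(\Sigma_+^2+\Sigma_-^2)$, $S_+=\frac12[(N_2-N_3)^2-N_1(2N_1-N_2-N_3)]$, $S_-=\frac{\sqrt3}{2}(N_3-N_2)(N_1-N_2-N_3)$, together with the constraint $\Sigma_+^2+\Sigma_-^2+\frac34[N_1^2+N_2^2+N_3^2-2(N_1N_2+N_2N_3+N_1N_3)]=1$. $\Phi(\tau,x)$ denotes the solution with initial value $x$ at $\tau=0$ evaluated at time $\tau$ (defined for all $\tau$ for non–type IX $x$). A Bianchi VIII point is one with all $N_i\neq0$, two of them of one sign and the third of the opposite sign. The Kasner circle is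 the set $N_1=N_2=N_3=0$, $\Sigma_+^2+\Sigma_-^2=1$. *)

theory Defs
  imports "HOL-Analysis.Analysis"
begin

text \<open>States are points (Sigma_plus, Sigma_minus, N1, N2, N3) of R^5, represented as
  nested pairs; the product norm is the Euclidean norm of R^5.\<close>

type_synonym wh_state = "real \<times> real \<times> real \<times> real \<times> real"

definition wh_q :: "real \<Rightarrow> real \<Rightarrow> real" where
  "wh_q sp sm = 2 * (sp\<^sup>2 + sm\<^sup>2)"

definition wh_Splus :: "real \<Rightarrow> real \<Rightarrow> real \<Rightarrow> real" where
  "wh_Splus n1 n2 n3 = (1/2) * ((n2 - n3)\<^sup>2 - n1 * (2*n1 - n2 - n3))"

definition wh_Sminus :: "real \<Rightarrow> real \<Rightarrow> real \<Rightarrow> real" where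
  "wh_Sminus n1 n2 n3 = (sqrt 3 / 2) * (n3 - n2) * (n1 - n2 - n3)"

definition wh_field :: "wh_state \<Rightarrow> wh_state" where
  "wh_field x = (case x of (sp, sm, n1, n2, n3) \<Rightarrow>
     (let q = wh_q sp sm in
      (-(2 - q) * sp - 3 * wh_Splus n1 n2 n3,
       -(2 - q) * sm - 3 * wh_Sminus n1 n2 n3,
       (q - 4 * sp) * n1,
       (q + 2 * sp + 2 * sqrt 3 * sm) * n2,
       (q + 2 * sp - 2 * sqrt 3 * sm) * n3)))"

definition wh_constraint :: "wh_state \<Rightarrow> bool" where
  "wh_constraint x = (case x of (sp, sm, n1, n2, n3) \<Rightarrow>
     sp\<^sup>2 + sm\<^sup>2 + (3/4) * (n1\<^sup>2 + n2\<^sup>2 + n3\<^sup>2 - 2 * (n1*n2 + n2*n3 + n1*n3)) = 1)"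

definition wh_solution :: "(real \<Rightarrow> wh_state) \<Rightarrow> bool" where
  "wh_solution \<phi> = (\<forall>t. (\<phi> has_vector_derivative wh_field (\<phi> t)) (at t))"

definition Phi :: "real \<Rightarrow> wh_state \<Rightarrow> wh_state" where
  "Phi \<tau> x = (THE \<phi>. wh_solution \<phi> \<and> \<phi> 0 = x) \<tau>"

definition bianchi_VIII :: "wh_state \<Rightarrow> bool" where
  "bianchi_VIII x = (case x of (sp, sm, n1, n2, n3) \<Rightarrow>
     n1 \<noteq> 0 \<and> n2 \<noteq> 0 \<and> n3 \<noteq> 0 \<and>
     ((sgn n1 = sgn n2 \<and> sgn n3 = - sgn n1) \<or>
      (sgn n2 = sgn n3 \<and> sgn n1 = - sgn n2) \<or>
      (sgn n1 = sgn n3 \<and> sgn n2 = - sgn n1)))"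

definition kasner_circle :: "wh_state set" where
  "kasner_circle = {(sp, sm, 0, 0, 0) | sp sm. sp\<^sup>2 + sm\<^sup>2 = 1}"

end

theory Submission
  imports Defs
begin

text \<open>The set \<open>\<Sigma>\<^sub>- = N\<^sub>1 = 0, N\<^sub>3 = -N\<^sub>2\<close> is invariant, being the fixed set of a symmetry of
  the field. On it the constraint reads \<open>\<Sigma>\<^sub>+\<^sup>2 + 3 N\<^sub>2\<^sup>2 = 1\<close> and
  \<open>\<Sigma>\<^sub>+' = -2 (1 - \<Sigma>\<^sub>+) (1 + \<Sigma>\<^sub>+)\<^sup>2\<close>, so the solution through
  \<open>(0, 0, 0, 1/\<surd>3, -1/\<surd>3)\<close>, where \<open>|N\<^sub>2 N\<^sub>3| = 1/3\<close>, runs into the Taub point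
  \<open>\<Sigma>\<^sub>+ = -1\<close> of the Kasner circle. Perturb its initial value to a Bianchi VIII point on the
  constraint surface with \<open>|N\<^sub>2 N\<^sub>3|\<close> still above \<open>1/4\<close>; by continuous dependence on the
  initial data over the fixed time \<open>T\<close>, the perturbed solution is still near the Kasner circle at
  time \<open>T\<close>, and flowing back by \<open>T\<close> returns the perturbed point. The constraint and the signs of
  the \<open>N\<^sub>i\<close> are preserved because they satisfy linear equations along solutions.

  Since \<open>Phi\<close> is defined through global solutions, existence and uniqueness are needed as well.
  When the sign of \<open>N\<^sub>3\<close> is opposite to those of \<open>N\<^sub>1, N\<^sub>2\<close>, the constraint forces
  \<open>|\<Sigma>| \<le> 1\<close>, hence \<open>|N\<^sub>i|\<close> grows at most like \<open>exp(6|t|)\<close>; with this a priori bound,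
  Picard--Lindeloef for a cut-off field yields global solutions.\<close>

section \<open>Coordinates and the vector field\<close>

definition Sp :: "wh_state \<Rightarrow> real" where "Sp x = fst x"
definition Sm :: "wh_state \<Rightarrow> real" where "Sm x = fst (snd x)"
definition N1 :: "wh_state \<Rightarrow> real" where "N1 x = fst (snd (snd x))"
definition N2 :: "wh_state \<Rightarrow> real" where "N2 x = fst (snd (snd (snd x)))"
definition N3 :: "wh_state \<Rightarrow> real" where "N3 x = snd (snd (snd (snd x)))"

lemmas coord_defs = Sp_def Sm_def N1_def N2_def N3_def

lemma coord_simps [simp]:
  "Sp (a, b, c, d, e) = a" "Sm (a, b, c, d, e) = b" "N1 (a, b, c, d, e) = c"
  "N2 (a, b, c, d, e) = d" "N3 (a, b, c, d, e) = e"
  by (simp_all add: coord_defs)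

lemma state_eq_coords: "x = (Sp x, Sm x, N1 x, N2 x, N3 x)"
  by (simp add: coord_defs)

lemma state_eqI:
  "Sp x = Sp y \<Longrightarrow> Sm x = Sm y \<Longrightarrow> N1 x = N1 y \<Longrightarrow> N2 x = N2 y \<Longrightarrow> N3 x = N3 y \<Longrightarrow> x = y"
  by (metis state_eq_coords)

lemma coords_diff [simp]:
  "Sp (x - y) = Sp x - Sp y" "Sm (x - y) = Sm x - Sm y" "N1 (x - y) = N1 x - N1 y"
  "N2 (x - y) = N2 x - N2 y" "N3 (x - y) = N3 x - N3 y"
  by (simp_all add: coord_defs)

lemma coords_scaleR [simp]:
  "Sp (c *\<^sub>R x) = c * Sp x" "Sm (c *\<^sub>R x) = c * Sm x" "N1 (c *\<^sub>R x) = c * N1 x"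
  "N2 (c *\<^sub>R x) = c * N2 x" "N3 (c *\<^sub>R x) = c * N3 x"
  by (simp_all add: coord_defs)

lemma norm_state_sq: "(norm x)\<^sup>2 = (Sp x)\<^sup>2 + (Sm x)\<^sup>2 + (N1 x)\<^sup>2 + (N2 x)\<^sup>2 + (N3 x)\<^sup>2"
  by (subst (1) state_eq_coords) (simp add: norm_Pair)

lemma abs_coord_le_norm:
  "\<bar>Sp x\<bar> \<le> norm x" "\<bar>Sm x\<bar> \<le> norm x" "\<bar>N1 x\<bar> \<le> norm x" "\<bar>N2 x\<bar> \<le> norm x" "\<bar>N3 x\<bar> \<le> norm x"
proof -
  have "\<bar>a\<bar> \<le> norm x" if "a\<^sup>2 \<le> (norm x)\<^sup>2" for a
    using that by (metis abs_le_square_iff abs_norm_cancel)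
  then show "\<bar>Sp x\<bar> \<le> norm x" "\<bar>Sm x\<bar> \<le> norm x" "\<bar>N1 x\<bar> \<le> norm x"
    "\<bar>N2 x\<bar> \<le> norm x" "\<bar>N3 x\<bar> \<le> norm x"
    unfolding norm_state_sq by (simp_all add: add_increasing add_increasing2)
qed

definition rate1 :: "wh_state \<Rightarrow> real" where
  "rate1 x = wh_q (Sp x) (Sm x) - 4 * Sp x"
definition rate2 :: "wh_state \<Rightarrow> real" where
  "rate2 x = wh_q (Sp x) (Sm x) + 2 * Sp x + 2 * sqrt 3 * Sm x"
definition rate3 :: "wh_state \<Rightarrow> real" where
  "rate3 x = wh_q (Sp x) (Sm x) + 2 * Sp x - 2 * sqrt 3 * Sm x"

lemma wh_field_coords:
  "Sp (wh_field x) = -(2 - wh_q (Sp x) (Sm x)) * Sp x - 3 * wh_Splus (N1 x) (N2 x) (N3 x)"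
  "Sm (wh_field x) = -(2 - wh_q (Sp x) (Sm x)) * Sm x - 3 * wh_Sminus (N1 x) (N2 x) (N3 x)"
  "N1 (wh_field x) = rate1 x * N1 x"
  "N2 (wh_field x) = rate2 x * N2 x"
  "N3 (wh_field x) = rate3 x * N3 x"
  by (subst (1 2) state_eq_coords, simp add: wh_field_def rate1_def rate2_def rate3_def Let_def)+

lemma has_real_derivative_coords:
  assumes "(f has_vector_derivative v) F"
  shows "((\<lambda>t. Sp (f t)) has_real_derivative Sp v) F" "((\<lambda>t. Sm (f t)) has_real_derivative Sm v) F"
    "((\<lambda>t. N1 (f t)) has_real_derivative N1 v) F" "((\<lambda>t. N2 (f t)) has_real_derivative N2 v) F"
    "((\<lambda>t. N3 (f t)) has_real_derivative N3 v) F"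
  using assms
  by (auto simp: has_real_derivative_iff_has_vector_derivative has_vector_derivative_def coord_defs
      intro!: derivative_eq_intros)

section \<open>Gronwall estimates and scalar linear equations\<close>

lemma mem_abs_interval: "s \<in> {-\<bar>s\<bar>..\<bar>s\<bar>}" for s :: real
  by (cases "0 \<le> s") auto

lemma gronwall_two_sided:
  fixes g g' :: "real \<Rightarrow> real"
  assumes deriv: "\<And>r. r \<in> {a..b} \<Longrightarrow> (g has_real_derivative g' r) (at r)"
    and bound: "\<And>r. r \<in> {a..b} \<Longrightarrow> \<bar>g' r\<bar> \<le> K * g r"
    and s: "s \<in> {a..b}" and t: "t \<in> {a..b}"
  shows "g t \<le> g s * exp (K * \<bar>t - s\<bar>)"
proof (cases "s \<le> t")
  case True
  have "g t * exp (- K * (t - s)) \<le> g s * exp (- K * (s - s))"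
  proof (rule DERIV_nonpos_imp_nonincreasing[where f = "\<lambda>r. g r * exp (- K * (r - s))", OF True])
    fix r assume "s \<le> r" "r \<le> t"
    then have r: "r \<in> {a..b}" using s t by auto
    have "((\<lambda>r. g r * exp (- K * (r - s))) has_real_derivative
        (g' r - K * g r) * exp (- K * (r - s))) (at r)"
      using deriv[OF r] by (auto intro!: derivative_eq_intros simp: algebra_simps)
    moreover have "(g' r - K * g r) * exp (- K * (r - s)) \<le> 0"
      using bound[OF r] by (intro mult_nonpos_nonneg) (auto simp: abs_le_iff)
    ultimately show "\<exists>y. ((\<lambda>r. g r * exp (- K * (r - s))) has_real_derivative y) (at r) \<and> y \<le> 0"
      by blast
  qed
  then have "g t * exp (- K * (t - s)) * exp (K * (t - s)) \<le> g s * exp (K * (t - s))"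
    by (simp add: mult_right_mono)
  then show ?thesis
    using True by (simp add: mult.assoc flip: exp_add)
next
  case False
  have "g t * exp (K * (t - s)) \<le> g s * exp (K * (s - s))"
  proof (rule DERIV_nonneg_imp_nondecreasing[where f = "\<lambda>r. g r * exp (K * (r - s))"])
    fix r assume "t \<le> r" "r \<le> s"
    then have r: "r \<in> {a..b}" using s t by auto
    have "((\<lambda>r. g r * exp (K * (r - s))) has_real_derivative
        (g' r + K * g r) * exp (K * (r - s))) (at r)"
      using deriv[OF r] by (auto intro!: derivative_eq_intros simp: algebra_simps)
    moreover have "(g' r + K * g r) * exp (K * (r - s)) \<ge> 0"
      using bound[OF r] by (intro mult_nonneg_nonneg) (auto simp: abs_le_iff)
    ultimately show "\<exists>y. ((\<lambda>r. g r * exp (K * (r - s))) has_real_derivative y) (at r) \<and> y \<ge> 0"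
      by blast
  qed (use False in auto)
  then have "g t * exp (K * (t - s)) * exp (K * (s - t)) \<le> g s * exp (K * (s - t))"
    by (simp add: mult_right_mono)
  then show ?thesis
    using False by (simp add: algebra_simps flip: exp_add)
qed

lemma continuous_on_Icc_abs_bound:
  fixes c :: "real \<Rightarrow> real"
  assumes "continuous_on {a..b} c"
  obtains K where "\<And>t. t \<in> {a..b} \<Longrightarrow> \<bar>c t\<bar> \<le> K"
proof -
  have "bounded (c ` {a..b})"
    by (rule compact_imp_bounded[OF compact_continuous_image[OF assms compact_Icc]])
  then show ?thesis
    using that unfolding bounded_real by blast
qed

lemma linear_ode_sq_bound:
  fixes u c :: "real \<Rightarrow> real"
  assumes deriv: "\<And>t. t \<in> {a..b} \<Longrightarrow> (u has_real_derivative c t * u t) (at t)"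
    and bound: "\<And>t. t \<in> {a..b} \<Longrightarrow> \<bar>c t\<bar> \<le> K"
    and "s \<in> {a..b}" "t \<in> {a..b}"
  shows "(u t)\<^sup>2 \<le> (u s)\<^sup>2 * exp (2 * K * \<bar>t - s\<bar>)"
proof (rule gronwall_two_sided[where g' = "\<lambda>t. 2 * c t * (u t)\<^sup>2"])
  fix r assume r: "r \<in> {a..b}"
  show "((\<lambda>t. (u t)\<^sup>2) has_real_derivative 2 * c r * (u r)\<^sup>2) (at r)"
    using deriv[OF r] by (auto intro!: derivative_eq_intros simp: power2_eq_square)
  show "\<bar>2 * c r * (u r)\<^sup>2\<bar> \<le> 2 * K * (u r)\<^sup>2"
    using bound[OF r] by (simp add: abs_mult mult_right_mono)
qed (use assms in auto)

lemma linear_ode_sgn: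
  fixes u c :: "real \<Rightarrow> real"
  assumes deriv: "\<And>t. t \<in> {a..b} \<Longrightarrow> (u has_real_derivative c t * u t) (at t)"
    and K: "\<And>t. t \<in> {a..b} \<Longrightarrow> \<bar>c t\<bar> \<le> K"
    and s: "s \<in> {a..b}" and t: "t \<in> {a..b}"
  shows "sgn (u t) = sgn (u s)"
proof -
  have zero_iff: "u r = 0 \<longleftrightarrow> u s = 0" if r: "r \<in> {a..b}" for r
    using linear_ode_sq_bound[OF deriv K r s] linear_ode_sq_bound[OF deriv K s r]
    by (auto simp: power2_eq_square order_antisym_conv mult_le_0_iff)
  show ?thesis
  proof (cases "u s = 0")
    case True
    then show ?thesis using zero_iff[OF t] by simp
  next
    case False
    have seg: "closed_segment s t \<subseteq> {a..b}"
      using s t by (auto simp: closed_segment_eq_real_ivl)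
    have "continuous_on {a..b} u"
      using deriv by (meson DERIV_continuous continuous_at_imp_continuous_on)
    then have cont_seg: "continuous_on (closed_segment s t) u"
      using seg by (rule continuous_on_subset)
    have "u s * u t > 0"
    proof (rule ccontr)
      assume "\<not> u s * u t > 0"
      then have "0 \<in> closed_segment (u s) (u t)"
        by (auto simp: closed_segment_eq_real_ivl zero_less_mult_iff mult_le_0_iff not_less)
      then obtain r where "r \<in> closed_segment s t" "u r = 0"
        using IVT'_closed_segment_real[OF _ cont_seg] by blast
      then show False
        using zero_iff False seg by blast
    qed
    then show ?thesis
      by (auto simp: sgn_if zero_less_mult_iff)
  qed
qed

section \<open>Invariants and a priori bounds\<close>

definition n_form :: "wh_state \<Rightarrow> real" where
  "n_form x = (N1 x)\<^sup>2 + (N2 x)\<^sup>2 + (N3 x)\<^sup>2 - 2 * (N1 x * N2 x + N2 x * N3 x + N1 x * N3 x)"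

definition constraint_defect :: "wh_state \<Rightarrow> real" where
  "constraint_defect x = (Sp x)\<^sup>2 + (Sm x)\<^sup>2 + 3/4 * n_form x - 1"

lemma wh_constraint_iff_defect: "wh_constraint x \<longleftrightarrow> constraint_defect x = 0"
  by (subst (1) state_eq_coords) (simp add: wh_constraint_def constraint_defect_def n_form_def)

lemma constraint_defect_has_derivative:
  assumes "(\<phi> has_vector_derivative c *\<^sub>R wh_field (\<phi> t)) (at t)"
  shows "((\<lambda>t. constraint_defect (\<phi> t)) has_real_derivative
    c * (2 * wh_q (Sp (\<phi> t)) (Sm (\<phi> t))) * constraint_defect (\<phi> t)) (at t)"
proof -
  note coords = has_real_derivative_coords[OF assms, unfolded coords_scaleR wh_field_coords]
  show ?thesis
    unfolding constraint_defect_def n_form_def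
    by (rule derivative_eq_intros coords refl)+
      (simp add: constraint_defect_def n_form_def wh_Splus_def wh_Sminus_def rate1_def rate2_def
        rate3_def wh_q_def power2_eq_square field_simps)
qed

text \<open>Solutions of \<open>x' = c(t) f(x)\<close> with \<open>0 \<le> c \<le> 1\<close> arise from the cut-off field used for
  local existence; they follow the orbits of \<open>f\<close>, so the invariants and a priori bounds hold for
  them as for genuine solutions.\<close>

definition time_changed_solution_on ::
    "(real \<Rightarrow> real) \<Rightarrow> real set \<Rightarrow> (real \<Rightarrow> wh_state) \<Rightarrow> bool" where
  "time_changed_solution_on c S \<phi> \<longleftrightarrow>
     (\<forall>t\<in>S. c t \<in> {0..1} \<and> (\<phi> has_vector_derivative c t *\<^sub>R wh_field (\<phi> t)) (at t))"

definition wh_solution_on :: "real set \<Rightarrow> (real \<Rightarrow> wh_state) \<Rightarrow> bool" where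
  "wh_solution_on S \<phi> \<longleftrightarrow> (\<forall>t\<in>S. (\<phi> has_vector_derivative wh_field (\<phi> t)) (at t))"

lemma wh_solution_on_time_changed: "wh_solution_on S \<phi> \<Longrightarrow> time_changed_solution_on (\<lambda>_. 1) S \<phi>"
  by (simp add: wh_solution_on_def time_changed_solution_on_def)

lemma wh_solution_on_subset: "wh_solution_on S \<phi> \<Longrightarrow> T \<subseteq> S \<Longrightarrow> wh_solution_on T \<phi>"
  by (auto simp: wh_solution_on_def)

lemma wh_solution_imp_solution_on: "wh_solution \<phi> \<Longrightarrow> wh_solution_on S \<phi>"
  by (simp add: wh_solution_def wh_solution_on_def)

lemma time_changed_solution_on_continuous:
  "time_changed_solution_on c S \<phi> \<Longrightarrow> continuous_on S \<phi>"
  unfolding time_changed_solution_on_def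
  by (meson continuous_at_imp_continuous_on has_vector_derivative_continuous)

lemma time_changed_coefficient_bound:
  assumes sol: "time_changed_solution_on c {a..b} \<phi>" and \<rho>: "continuous_on UNIV \<rho>"
  obtains K where "\<And>t. t \<in> {a..b} \<Longrightarrow> \<bar>c t * \<rho> (\<phi> t)\<bar> \<le> K"
proof -
  have "continuous_on {a..b} (\<lambda>t. \<rho> (\<phi> t))"
    using continuous_on_compose2[OF \<rho> time_changed_solution_on_continuous[OF sol]] by simp
  then obtain K where K: "\<And>t. t \<in> {a..b} \<Longrightarrow> \<bar>\<rho> (\<phi> t)\<bar> \<le> K"
    using continuous_on_Icc_abs_bound by blast
  have "\<bar>c t * \<rho> (\<phi> t)\<bar> \<le> K" if t: "t \<in> {a..b}" for t
  proof -
    have "\<bar>c t\<bar> \<le> 1"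
      using sol t by (auto simp: time_changed_solution_on_def)
    from mult_mono[OF this K[OF t]] show ?thesis
      by (simp add: abs_mult)
  qed
  then show ?thesis by (rule that)
qed

lemma continuous_on_rates:
  "continuous_on UNIV rate1" "continuous_on UNIV rate2" "continuous_on UNIV rate3"
  "continuous_on UNIV (\<lambda>x. 2 * wh_q (Sp x) (Sm x))"
  unfolding rate1_def rate2_def rate3_def wh_q_def coord_defs by (intro continuous_intros)+

lemma time_changed_sgn_invariants:
  assumes sol: "time_changed_solution_on c {a..b} \<phi>" and s: "s \<in> {a..b}" and t: "t \<in> {a..b}"
  shows "sgn (N1 (\<phi> t)) = sgn (N1 (\<phi> s))" "sgn (N2 (\<phi> t)) = sgn (N2 (\<phi> s))"
    "sgn (N3 (\<phi> t)) = sgn (N3 (\<phi> s))"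
    "sgn (constraint_defect (\<phi> t)) = sgn (constraint_defect (\<phi> s))"
proof -
  have deriv: "(\<phi> has_vector_derivative c r *\<^sub>R wh_field (\<phi> r)) (at r)" if "r \<in> {a..b}" for r
    using sol that by (simp add: time_changed_solution_on_def)
  have linear: "sgn (u t) = sgn (u s)"
    if deriv_u: "\<And>r. r \<in> {a..b} \<Longrightarrow> (u has_real_derivative c r * \<rho> (\<phi> r) * u r) (at r)"
      and cont: "continuous_on UNIV \<rho>" for u \<rho>
  proof -
    obtain K where "\<And>r. r \<in> {a..b} \<Longrightarrow> \<bar>c r * \<rho> (\<phi> r)\<bar> \<le> K"
      using time_changed_coefficient_bound[OF sol cont] by blast
    then show ?thesis
      using linear_ode_sgn[of a b u "\<lambda>r. c r * \<rho> (\<phi> r)"] deriv_u s t by blast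
  qed
  note coords = has_real_derivative_coords[OF deriv, unfolded coords_scaleR wh_field_coords]
  show "sgn (N1 (\<phi> t)) = sgn (N1 (\<phi> s))"
    using coords(3) continuous_on_rates(1) by (intro linear) (auto simp: mult.assoc)
  show "sgn (N2 (\<phi> t)) = sgn (N2 (\<phi> s))"
    using coords(4) continuous_on_rates(2) by (intro linear) (auto simp: mult.assoc)
  show "sgn (N3 (\<phi> t)) = sgn (N3 (\<phi> s))"
    using coords(5) continuous_on_rates(3) by (intro linear) (auto simp: mult.assoc)
  show "sgn (constraint_defect (\<phi> t)) = sgn (constraint_defect (\<phi> s))"
    using constraint_defect_has_derivative[OF deriv] continuous_on_rates(4) by (intro linear) auto
qed

definition wh_admissible :: "wh_state \<Rightarrow> bool" where
  "wh_admissible x \<longleftrightarrow> wh_constraint x \<and> N3 x * N1 x \<le> 0 \<and> N3 x * N2 x \<le> 0"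

lemma time_changed_admissible:
  assumes sol: "time_changed_solution_on c {a..b} \<phi>" and s: "s \<in> {a..b}" and t: "t \<in> {a..b}"
    and adm: "wh_admissible (\<phi> s)"
  shows "wh_admissible (\<phi> t)"
proof -
  note inv = time_changed_sgn_invariants[OF sol s t]
  have "sgn (N3 (\<phi> t) * N1 (\<phi> t)) = sgn (N3 (\<phi> s) * N1 (\<phi> s))"
    "sgn (N3 (\<phi> t) * N2 (\<phi> t)) = sgn (N3 (\<phi> s) * N2 (\<phi> s))"
    by (simp_all add: sgn_mult inv)
  then show ?thesis
    using adm inv(4) unfolding wh_admissible_def wh_constraint_iff_defect
    by (metis sgn_le_0_iff sgn_0_0)
qed

lemma wh_admissible_Sigma_le_1:
  assumes "wh_admissible x"
  shows "(Sp x)\<^sup>2 + (Sm x)\<^sup>2 \<le> 1"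
proof -
  have "n_form x = (N1 x - N2 x)\<^sup>2 + (N3 x)\<^sup>2 - 2 * (N3 x * N1 x) - 2 * (N3 x * N2 x)"
    by (simp add: n_form_def power2_eq_square algebra_simps)
  then have "n_form x \<ge> 0"
    using assms zero_le_power2[of "N1 x - N2 x"] zero_le_power2[of "N3 x"]
    unfolding wh_admissible_def by linarith
  then show ?thesis
    using assms by (simp add: wh_admissible_def wh_constraint_iff_defect constraint_defect_def)
qed

lemma abs_rates_le_6:
  assumes "(Sp x)\<^sup>2 + (Sm x)\<^sup>2 \<le> 1"
  shows "\<bar>rate1 x\<bar> \<le> 6" "\<bar>rate2 x\<bar> \<le> 6" "\<bar>rate3 x\<bar> \<le> 6"
proof -
  have "\<bar>Sp x + k * Sm x\<bar> \<le> 2" if "k\<^sup>2 = 3" for k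
  proof -
    have "(Sp x + k * Sm x)\<^sup>2 \<le> (Sp x + k * Sm x)\<^sup>2 + (k * Sp x - Sm x)\<^sup>2"
      by simp
    also have "\<dots> = (1 + k\<^sup>2) * ((Sp x)\<^sup>2 + (Sm x)\<^sup>2)"
      by (simp add: power2_eq_square algebra_simps)
    also have "\<dots> \<le> 2\<^sup>2"
      using assms that by simp
    finally show ?thesis
      using abs_le_square_iff[of "Sp x + k * Sm x" "2::real"] by simp
  qed
  from this[of "sqrt 3"] this[of "- sqrt 3"]
  have "\<bar>Sp x + sqrt 3 * Sm x\<bar> \<le> 2" "\<bar>Sp x - sqrt 3 * Sm x\<bar> \<le> 2"
    by simp_all
  moreover have "\<bar>Sp x\<bar> \<le> 1"
    using assms zero_le_power2[of "Sm x"] abs_square_le_1[of "Sp x"] by linarith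
  moreover have "0 \<le> wh_q (Sp x) (Sm x)" "wh_q (Sp x) (Sm x) \<le> 2"
    using assms by (simp_all add: wh_q_def)
  ultimately show "\<bar>rate1 x\<bar> \<le> 6" "\<bar>rate2 x\<bar> \<le> 6" "\<bar>rate3 x\<bar> \<le> 6"
    unfolding rate1_def rate2_def rate3_def by linarith+
qed

definition N_norm_sq :: "wh_state \<Rightarrow> real" where
  "N_norm_sq x = (N1 x)\<^sup>2 + (N2 x)\<^sup>2 + (N3 x)\<^sup>2"

lemma N_norm_sq_nonneg: "0 \<le> N_norm_sq x"
  by (simp add: N_norm_sq_def)

lemma time_changed_norm_bound:
  assumes sol: "time_changed_solution_on c {a..b} \<phi>" and s: "s \<in> {a..b}" and t: "t \<in> {a..b}"
    and adm: "wh_admissible (\<phi> s)"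
  shows "(norm (\<phi> t))\<^sup>2 \<le> 1 + N_norm_sq (\<phi> s) * exp (12 * \<bar>t - s\<bar>)"
proof -
  have deriv: "(\<phi> has_vector_derivative c r *\<^sub>R wh_field (\<phi> r)) (at r)" if "r \<in> {a..b}" for r
    using sol that by (simp add: time_changed_solution_on_def)
  note coords = has_real_derivative_coords[OF deriv, unfolded coords_scaleR wh_field_coords mult.assoc[symmetric]]
  have bound: "\<bar>c r * \<rho> (\<phi> r)\<bar> \<le> 6"
    if r: "r \<in> {a..b}" and \<rho>: "\<bar>\<rho> (\<phi> r)\<bar> \<le> 6" for r \<rho>
  proof -
    have "\<bar>c r\<bar> \<le> 1"
      using sol r by (auto simp: time_changed_solution_on_def)
    then show ?thesis
      using mult_mono[of "\<bar>c r\<bar>" 1 "\<bar>\<rho> (\<phi> r)\<bar>" 6] \<rho> by (simp add: abs_mult)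
  qed
  have rates: "\<bar>rate1 (\<phi> r)\<bar> \<le> 6" "\<bar>rate2 (\<phi> r)\<bar> \<le> 6" "\<bar>rate3 (\<phi> r)\<bar> \<le> 6"
    if "r \<in> {a..b}" for r
    using abs_rates_le_6[OF wh_admissible_Sigma_le_1[OF time_changed_admissible[OF sol s that adm]]] .
  have "(N1 (\<phi> t))\<^sup>2 \<le> (N1 (\<phi> s))\<^sup>2 * exp (2 * 6 * \<bar>t - s\<bar>)"
    by (rule linear_ode_sq_bound[where u = "\<lambda>t. N1 (\<phi> t)" and c = "\<lambda>r. c r * rate1 (\<phi> r)"])
      (use coords(3) bound rates(1) s t in auto)
  moreover have "(N2 (\<phi> t))\<^sup>2 \<le> (N2 (\<phi> s))\<^sup>2 * exp (2 * 6 * \<bar>t - s\<bar>)"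
    by (rule linear_ode_sq_bound[where u = "\<lambda>t. N2 (\<phi> t)" and c = "\<lambda>r. c r * rate2 (\<phi> r)"])
      (use coords(4) bound rates(2) s t in auto)
  moreover have "(N3 (\<phi> t))\<^sup>2 \<le> (N3 (\<phi> s))\<^sup>2 * exp (2 * 6 * \<bar>t - s\<bar>)"
    by (rule linear_ode_sq_bound[where u = "\<lambda>t. N3 (\<phi> t)" and c = "\<lambda>r. c r * rate3 (\<phi> r)"])
      (use coords(5) bound rates(3) s t in auto)
  moreover have "(Sp (\<phi> t))\<^sup>2 + (Sm (\<phi> t))\<^sup>2 \<le> 1"
    using wh_admissible_Sigma_le_1[OF time_changed_admissible[OF sol s t adm]] .
  ultimately show ?thesis
    unfolding norm_state_sq N_norm_sq_def by (simp add: algebra_simps)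
qed

section \<open>Lipschitz estimates, uniqueness and continuous dependence\<close>

lemma lipschitz_on_scaleR_bounded:
  fixes f :: "'a::metric_space \<Rightarrow> real" and g :: "'a \<Rightarrow> 'b::real_normed_vector"
  assumes f: "L1-lipschitz_on U f" "\<And>x. x \<in> U \<Longrightarrow> \<bar>f x\<bar> \<le> B1"
    and g: "L2-lipschitz_on U g" "\<And>x. x \<in> U \<Longrightarrow> norm (g x) \<le> B2"
    and nonneg: "0 \<le> B1" "0 \<le> B2"
  shows "(B1 * L2 + B2 * L1)-lipschitz_on U (\<lambda>x. f x *\<^sub>R g x)"
proof (rule lipschitz_onI)
  fix x y assume x: "x \<in> U" and y: "y \<in> U"
  have "dist (f x *\<^sub>R g x) (f y *\<^sub>R g y) = norm (f x *\<^sub>R (g x - g y) + (f x - f y) *\<^sub>R g y)"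
    by (simp add: dist_norm algebra_simps)
  also have "\<dots> \<le> \<bar>f x\<bar> * dist (g x) (g y) + \<bar>f x - f y\<bar> * norm (g y)"
    by (rule order_trans[OF norm_triangle_ineq]) (simp add: dist_norm)
  also have "\<dots> \<le> B1 * (L2 * dist x y) + (L1 * dist x y) * B2"
    using f g x y nonneg lipschitz_onD[OF f(1) x y] lipschitz_onD[OF g(1) x y]
    by (intro add_mono mult_mono) (auto simp: dist_real_def lipschitz_on_nonneg)
  finally show "dist (f x *\<^sub>R g x) (f y *\<^sub>R g y) \<le> (B1 * L2 + B2 * L1) * dist x y"
    by (simp add: algebra_simps)
next
  show "0 \<le> B1 * L2 + B2 * L1"
    using assms lipschitz_on_nonneg[OF f(1)] lipschitz_on_nonneg[OF g(1)] by simp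
qed

definition bounded_lipschitz_on :: "'a::metric_space set \<Rightarrow> ('a \<Rightarrow> real) \<Rightarrow> bool" where
  "bounded_lipschitz_on U f \<longleftrightarrow> (\<exists>L. L-lipschitz_on U f) \<and> (\<exists>B\<ge>0. \<forall>x\<in>U. \<bar>f x\<bar> \<le> B)"

lemma bounded_lipschitz_on_const: "bounded_lipschitz_on U (\<lambda>x. c)"
  unfolding bounded_lipschitz_on_def
  using lipschitz_on_constant[of U c] abs_ge_zero[of c] by blast

lemma bounded_lipschitz_on_add:
  "bounded_lipschitz_on U f \<Longrightarrow> bounded_lipschitz_on U g \<Longrightarrow> bounded_lipschitz_on U (\<lambda>x. f x + g x)"
  unfolding bounded_lipschitz_on_def
  by (auto intro!: lipschitz_on_add exI[where x = "_ + _"] abs_triangle_ineq[THEN order_trans] add_mono)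

lemma bounded_lipschitz_on_uminus:
  "bounded_lipschitz_on U f \<Longrightarrow> bounded_lipschitz_on U (\<lambda>x. - f x)"
  unfolding bounded_lipschitz_on_def by (auto intro!: lipschitz_on_minus)

lemma bounded_lipschitz_on_diff:
  "bounded_lipschitz_on U f \<Longrightarrow> bounded_lipschitz_on U g \<Longrightarrow> bounded_lipschitz_on U (\<lambda>x. f x - g x)"
  using bounded_lipschitz_on_add[OF _ bounded_lipschitz_on_uminus, of U f g] by simp

lemma bounded_lipschitz_on_mult:
  assumes "bounded_lipschitz_on U f" "bounded_lipschitz_on U g"
  shows "bounded_lipschitz_on U (\<lambda>x. f x * g x)"
proof -
  obtain L1 B1 where f: "L1-lipschitz_on U f" "\<And>x. x \<in> U \<Longrightarrow> \<bar>f x\<bar> \<le> B1" "0 \<le> B1"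
    using assms(1) unfolding bounded_lipschitz_on_def by blast
  obtain L2 B2 where g: "L2-lipschitz_on U g" "\<And>x. x \<in> U \<Longrightarrow> \<bar>g x\<bar> \<le> B2" "0 \<le> B2"
    using assms(2) unfolding bounded_lipschitz_on_def by blast
  have "(B1 * L2 + B2 * L1)-lipschitz_on U (\<lambda>x. f x * g x)"
    using lipschitz_on_scaleR_bounded[OF f(1,2) g(1) _ f(3) g(3)] g(2) by simp
  moreover have "\<forall>x\<in>U. \<bar>f x * g x\<bar> \<le> B1 * B2"
    using f g by (auto simp: abs_mult intro!: mult_mono)
  ultimately show ?thesis
    unfolding bounded_lipschitz_on_def using f(3) g(3) by (blast intro: mult_nonneg_nonneg)
qed

lemma bounded_lipschitz_on_divide:
  "bounded_lipschitz_on U f \<Longrightarrow> bounded_lipschitz_on U (\<lambda>x. f x / c)"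
  using bounded_lipschitz_on_mult[OF _ bounded_lipschitz_on_const, of U f "1 / c"] by simp

lemmas bounded_lipschitz_on_intros =
  bounded_lipschitz_on_const bounded_lipschitz_on_add bounded_lipschitz_on_uminus
  bounded_lipschitz_on_diff bounded_lipschitz_on_mult bounded_lipschitz_on_divide

lemma bounded_lipschitz_on_coords:
  assumes "bounded U"
  shows "bounded_lipschitz_on U Sp" "bounded_lipschitz_on U Sm" "bounded_lipschitz_on U N1"
    "bounded_lipschitz_on U N2" "bounded_lipschitz_on U N3"
proof -
  obtain B where B: "\<And>x. x \<in> U \<Longrightarrow> norm x \<le> B" "0 \<le> B"
    using assms by (metis bounded_pos less_imp_le)
  have "bounded_lipschitz_on U p"
    if "\<And>x. \<bar>p x\<bar> \<le> norm x" "\<And>x y. p (x - y) = p x - p y" for p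
  proof -
    have "1-lipschitz_on U p"
      by (rule lipschitz_onI) (auto simp: dist_real_def dist_norm that(1) that(2)[symmetric])
    then show ?thesis
      unfolding bounded_lipschitz_on_def using B that(1) order_trans by blast
  qed
  then show "bounded_lipschitz_on U Sp" "bounded_lipschitz_on U Sm" "bounded_lipschitz_on U N1"
    "bounded_lipschitz_on U N2" "bounded_lipschitz_on U N3"
    using abs_coord_le_norm by auto
qed

lemma wh_field_lipschitz_on_bounded:
  assumes "bounded U"
  obtains L where "L-lipschitz_on U wh_field"
proof -
  have "bounded_lipschitz_on U (\<lambda>x. Sp (wh_field x))" "bounded_lipschitz_on U (\<lambda>x. Sm (wh_field x))"
    "bounded_lipschitz_on U (\<lambda>x. N1 (wh_field x))" "bounded_lipschitz_on U (\<lambda>x. N2 (wh_field x))"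
    "bounded_lipschitz_on U (\<lambda>x. N3 (wh_field x))"
    unfolding wh_field_coords rate1_def rate2_def rate3_def wh_q_def
      wh_Splus_def wh_Sminus_def power2_eq_square
    by (rule bounded_lipschitz_on_intros bounded_lipschitz_on_coords[OF assms])+
  then have "\<exists>L. L-lipschitz_on U (\<lambda>x. p x)"
    if "p \<in> {\<lambda>x. Sp (wh_field x), \<lambda>x. Sm (wh_field x), \<lambda>x. N1 (wh_field x),
      \<lambda>x. N2 (wh_field x), \<lambda>x. N3 (wh_field x)}" for p
    using that unfolding bounded_lipschitz_on_def by blast
  then obtain L1 L2 L3 L4 L5 where L:
    "L1-lipschitz_on U (\<lambda>x. Sp (wh_field x))" "L2-lipschitz_on U (\<lambda>x. Sm (wh_field x))"
    "L3-lipschitz_on U (\<lambda>x. N1 (wh_field x))" "L4-lipschitz_on U (\<lambda>x. N2 (wh_field x))"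
    "L5-lipschitz_on U (\<lambda>x. N3 (wh_field x))"
    by (meson insertI1 insertI2)
  have "\<exists>L. L-lipschitz_on U
      (\<lambda>x. (Sp (wh_field x), Sm (wh_field x), N1 (wh_field x), N2 (wh_field x), N3 (wh_field x)))"
    using lipschitz_on_Pair[OF L(1) lipschitz_on_Pair[OF L(2) lipschitz_on_Pair[OF L(3)
        lipschitz_on_Pair[OF L(4) L(5)]]]] by blast
  moreover have "(\<lambda>x. (Sp (wh_field x), Sm (wh_field x), N1 (wh_field x), N2 (wh_field x),
      N3 (wh_field x))) = wh_field"
    by (simp flip: state_eq_coords)
  ultimately show ?thesis
    using that by metis
qed

lemma norm_sq_has_real_derivative:
  fixes d :: "real \<Rightarrow> 'a::real_inner"
  assumes "(d has_vector_derivative e) (at t)"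
  shows "((\<lambda>s. (norm (d s))\<^sup>2) has_real_derivative 2 * inner (d t) e) (at t)"
  using assms
  unfolding power2_norm_eq_inner has_real_derivative_iff_has_vector_derivative has_vector_derivative_def
  by (auto intro!: derivative_eq_intros simp: inner_commute algebra_simps)

lemma wh_solution_on_dist_bound:
  assumes \<phi>: "wh_solution_on {a..b} \<phi>" and \<psi>: "wh_solution_on {a..b} \<psi>"
    and L: "L-lipschitz_on U wh_field" and in_U: "\<And>r. r \<in> {a..b} \<Longrightarrow> \<phi> r \<in> U \<and> \<psi> r \<in> U"
    and s: "s \<in> {a..b}" and t: "t \<in> {a..b}"
  shows "norm (\<phi> t - \<psi> t) \<le> norm (\<phi> s - \<psi> s) * exp (L * \<bar>t - s\<bar>)"
proof -
  define g' where "g' r = 2 * inner (\<phi> r - \<psi> r) (wh_field (\<phi> r) - wh_field (\<psi> r))" for r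
  have "(norm (\<phi> t - \<psi> t))\<^sup>2 \<le> (norm (\<phi> s - \<psi> s))\<^sup>2 * exp (2 * L * \<bar>t - s\<bar>)"
  proof (rule gronwall_two_sided[where g' = g', OF _ _ s t])
    fix r assume r: "r \<in> {a..b}"
    show "((\<lambda>r. (norm (\<phi> r - \<psi> r))\<^sup>2) has_real_derivative g' r) (at r)"
      unfolding g'_def using \<phi> \<psi> r
      by (intro norm_sq_has_real_derivative derivative_intros) (auto simp: wh_solution_on_def)
    have "\<bar>g' r\<bar> \<le> 2 * (norm (\<phi> r - \<psi> r) * norm (wh_field (\<phi> r) - wh_field (\<psi> r)))"
      unfolding g'_def using Cauchy_Schwarz_ineq2 by (simp add: abs_mult)
    also have "\<dots> \<le> 2 * (norm (\<phi> r - \<psi> r) * (L * norm (\<phi> r - \<psi> r)))"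
      using lipschitz_onD[OF L, of "\<phi> r" "\<psi> r"] in_U[OF r]
      by (intro mult_left_mono) (auto simp: dist_norm)
    finally show "\<bar>g' r\<bar> \<le> 2 * L * (norm (\<phi> r - \<psi> r))\<^sup>2"
      by (simp add: power2_eq_square algebra_simps)
  qed
  also have "\<dots> = (norm (\<phi> s - \<psi> s) * exp (L * \<bar>t - s\<bar>))\<^sup>2"
    by (simp add: algebra_simps flip: exp_of_nat_mult)
  finally show ?thesis
    by (rule power2_le_imp_le) simp
qed

lemma wh_solution_on_unique:
  assumes \<phi>: "wh_solution_on {a..b} \<phi>" and \<psi>: "wh_solution_on {a..b} \<psi>"
    and s: "s \<in> {a..b}" and t: "t \<in> {a..b}" and eq: "\<phi> s = \<psi> s"
  shows "\<phi> t = \<psi> t"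
proof -
  define U where "U = \<phi> ` {a..b} \<union> \<psi> ` {a..b}"
  have "compact U"
    unfolding U_def using \<phi> \<psi>
    by (intro compact_Un compact_continuous_image compact_Icc
        time_changed_solution_on_continuous[OF wh_solution_on_time_changed])
  then obtain L where "L-lipschitz_on U wh_field"
    using wh_field_lipschitz_on_bounded compact_imp_bounded by blast
  from wh_solution_on_dist_bound[OF \<phi> \<psi> this _ s t] show ?thesis
    using eq by (simp add: U_def)
qed

lemma wh_solution_continuous_dependence:
  assumes "0 \<le> T"
  obtains C where "\<And>\<phi> \<psi>. wh_solution \<phi> \<Longrightarrow> wh_solution \<psi> \<Longrightarrow>
    wh_admissible (\<phi> 0) \<Longrightarrow> wh_admissible (\<psi> 0) \<Longrightarrow> N_norm_sq (\<phi> 0) \<le> B \<Longrightarrow>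
    N_norm_sq (\<psi> 0) \<le> B \<Longrightarrow> norm (\<phi> T - \<psi> T) \<le> C * norm (\<phi> 0 - \<psi> 0)"
proof -
  define R where "R = sqrt (1 + B * exp (12 * T))"
  obtain L where L: "L-lipschitz_on (cball 0 R) wh_field"
    using wh_field_lipschitz_on_bounded[of "cball 0 R"] by auto
  have "norm (\<phi> T - \<psi> T) \<le> exp (L * T) * norm (\<phi> 0 - \<psi> 0)"
    if \<phi>: "wh_solution \<phi>" "wh_admissible (\<phi> 0)" "N_norm_sq (\<phi> 0) \<le> B"
      and \<psi>: "wh_solution \<psi>" "wh_admissible (\<psi> 0)" "N_norm_sq (\<psi> 0) \<le> B" for \<phi> \<psi>
  proof -
    have in_ball: "\<xi> r \<in> cball 0 R"
      if "wh_solution \<xi>" "wh_admissible (\<xi> 0)" "N_norm_sq (\<xi> 0) \<le> B" "r \<in> {0..T}" for \<xi> r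
    proof -
      have "(norm (\<xi> r))\<^sup>2 \<le> 1 + N_norm_sq (\<xi> 0) * exp (12 * \<bar>r - 0\<bar>)"
        using that assms
        by (intro time_changed_norm_bound[of "\<lambda>_. 1" 0 T])
          (auto intro: wh_solution_on_time_changed wh_solution_imp_solution_on)
      also have "\<dots> \<le> 1 + B * exp (12 * T)"
        using that order_trans[OF N_norm_sq_nonneg that(3)] by (intro add_left_mono mult_mono) auto
      finally show ?thesis
        by (simp add: R_def real_le_rsqrt)
    qed
    show ?thesis
      using wh_solution_on_dist_bound[OF _ _ L, of 0 T \<phi> \<psi> 0 T] in_ball \<phi> \<psi> assms
      by (simp add: wh_solution_imp_solution_on mult.commute)
  qed
  then show ?thesis
    using that by blast
qed

section \<open>Global existence\<close>

lemma norm_integral_exp_weight_le: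
  fixes g :: "real \<Rightarrow> 'a::euclidean_space"
  assumes T: "0 \<le> T" and cont: "continuous_on {0..T} g" and K: "0 < K"
    and bound: "\<And>s. s \<in> {0..T} \<Longrightarrow> norm (g s) \<le> C * exp (K * s)"
  shows "norm (integral {0..T} g) \<le> C * exp (K * T) / K"
proof -
  have "norm (g 0) \<le> C"
    using bound[of 0] T by simp
  then have C: "0 \<le> C"
    using norm_ge_zero order_trans by blast
  have primitive: "((\<lambda>s. C * exp (K * s)) has_integral C * exp (K * T) / K - C * exp (K * 0) / K) {0..T}"
  proof (rule fundamental_theorem_of_calculus[OF T])
    fix s assume "s \<in> {0..T}"
    have "((\<lambda>s. C * exp (K * s) / K) has_real_derivative C * exp (K * s)) (at s)"
      using K by (auto intro!: derivative_eq_intros)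
    then show "((\<lambda>s. C * exp (K * s) / K) has_vector_derivative C * exp (K * s)) (at s within {0..T})"
      by (simp add: has_real_derivative_iff_has_vector_derivative has_vector_derivative_at_within)
  qed
  have "norm (integral {0..T} g) \<le> integral {0..T} (\<lambda>s. C * exp (K * s))"
    using integrable_continuous_real[OF cont] primitive bound
    by (intro integral_norm_bound_integral) (auto simp: has_integral_integrable)
  also have "\<dots> \<le> C * exp (K * T) / K"
    using integral_unique[OF primitive] C K by simp
  finally show ?thesis .
qed

lemma norm_integral_diff_exp_weight_le:
  fixes g :: "real \<Rightarrow> 'a::euclidean_space"
  assumes cont: "continuous_on UNIV g" and K: "0 < K"
    and bound: "\<And>s. norm (g s) \<le> C * exp (K * \<bar>s\<bar>)" and a: "a \<le> 0" "a \<le> \<tau>"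
  shows "norm (integral {a..\<tau>} g - integral {a..0} g) \<le> C * exp (K * \<bar>\<tau>\<bar>) / K"
proof -
  have pos: "norm (g s) \<le> C * exp (K * s)" "norm (g (- s)) \<le> C * exp (K * s)" if "0 \<le> s" for s
    using bound[of s] bound[of "- s"] that by simp_all
  have integrable: "g integrable_on {a..b}" for a b
    using integrable_continuous_real[OF continuous_on_subset[OF cont]] by blast
  show ?thesis
  proof (cases "0 \<le> \<tau>")
    case True
    have "integral {a..\<tau>} g = integral {a..0} g + integral {0..\<tau>} g"
      using Henstock_Kurzweil_Integration.integral_combine[where c = 0 and b = \<tau> and f = g]
        a True integrable by simp
    moreover have "norm (integral {0..\<tau>} g) \<le> C * exp (K * \<tau>) / K"
      using pos True by (intro norm_integral_exp_weight_le continuous_on_subset[OF cont] K) auto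
    ultimately show ?thesis
      using True by simp
  next
    case False
    have "integral {a..0} g = integral {a..\<tau>} g + integral {\<tau>..0} g"
      using Henstock_Kurzweil_Integration.integral_combine[where c = \<tau> and b = 0 and f = g]
        a False integrable by simp
    moreover have "integral {\<tau>..0} g = integral {0..-\<tau>} (\<lambda>s. g (- s))"
      using Henstock_Kurzweil_Integration.integral_reflect_real[where a = \<tau> and b = 0 and f = g]
      by simp
    moreover have "norm (integral {0..-\<tau>} (\<lambda>s. g (- s))) \<le> C * exp (K * (- \<tau>)) / K"
      using pos False
      by (intro norm_integral_exp_weight_le continuous_on_compose2[OF cont] continuous_intros K) auto
    ultimately show ?thesis
      using False by (simp add: norm_minus_commute)
  qed
qed

lemma norm_integral_lipschitz_diff_le:
  fixes f :: "'a::euclidean_space \<Rightarrow> 'a"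
  assumes lip: "L-lipschitz_on UNIV f" and K: "0 < K"
    and y: "continuous_on UNIV y" and z: "continuous_on UNIV z"
    and yz: "\<And>s. dist (y s) (z s) \<le> D * exp (K * \<bar>s\<bar>)" and a: "a \<le> 0" "a \<le> \<tau>"
  shows "norm ((integral {a..\<tau>} (\<lambda>s. f (y s)) - integral {a..0} (\<lambda>s. f (y s))) -
      (integral {a..\<tau>} (\<lambda>s. f (z s)) - integral {a..0} (\<lambda>s. f (z s)))) \<le> L * D * exp (K * \<bar>\<tau>\<bar>) / K"
proof -
  have f: "continuous_on UNIV f"
    by (rule lipschitz_on_continuous_on[OF lip])
  have cont: "continuous_on UNIV (\<lambda>s. f (y s) - f (z s))"
    by (intro continuous_intros continuous_on_compose2[OF f] y z) auto
  have bound: "norm (f (y s) - f (z s)) \<le> (L * D) * exp (K * \<bar>s\<bar>)" for s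
    using lipschitz_onD[OF lip UNIV_I UNIV_I, of "y s" "z s"] yz[of s] lipschitz_on_nonneg[OF lip]
    by (auto simp: dist_norm mult.assoc intro: order_trans mult_left_mono)
  have "(\<lambda>s. f (g s)) integrable_on {c..d}" if "continuous_on UNIV g" for g :: "real \<Rightarrow> 'a" and c d
  proof -
    have "continuous_on {c..d} g"
      using that by (rule continuous_on_subset) simp
    then have "continuous_on {c..d} (\<lambda>s. f (g s))"
      by (rule continuous_on_compose2[OF f]) simp
    then show ?thesis
      by (rule integrable_continuous_real)
  qed
  with norm_integral_diff_exp_weight_le[OF cont K bound a] y z show ?thesis
    by (simp add: integral_diff algebra_simps)
qed

lemma integral_equation_has_vector_derivative:
  fixes h :: "real \<Rightarrow> 'a::banach"
  assumes h: "continuous_on {a..b} h" and x: "\<And>s. s \<in> {a..b} \<Longrightarrow> x s = c + integral {a..s} h"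
    and t: "t \<in> {a<..<b}"
  shows "(x has_vector_derivative h t) (at t)"
proof -
  have "at t within {a..b} = at t"
    by (rule at_within_interior) (use t in simp)
  moreover have "((\<lambda>s. integral {a..s} h) has_vector_derivative h t) (at t within {a..b})"
    using t by (intro integral_has_vector_derivative h) auto
  ultimately have "((\<lambda>s. integral {a..s} h) has_vector_derivative h t) (at t)"
    by (simp only:)
  from has_vector_derivative_add[OF has_vector_derivative_const this]
  have deriv: "((\<lambda>s. c + integral {a..s} h) has_vector_derivative h t) (at t)"
    by simp
  have "c + integral {a..s} h = x s" if "s \<in> {a<..<b}" for s
    using x that by simp
  from has_vector_derivative_transform_within_open[OF deriv _ t this]
  show ?thesis
    by simp
qed

lemma continuous_clamp_in_bcontfun:
  fixes g :: "real \<Rightarrow> 'a::real_normed_vector"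
  assumes g: "continuous_on {a..b} g" and ab: "a \<le> b"
  shows "(\<lambda>t. g (max a (min b t))) \<in> bcontfun"
proof -
  have "bounded (g ` {a..b})"
    by (rule compact_imp_bounded[OF compact_continuous_image[OF g compact_Icc]])
  then obtain B where B: "\<And>s. s \<in> {a..b} \<Longrightarrow> norm (g s) \<le> B"
    unfolding bounded_iff by blast
  show ?thesis
  proof (rule bcontfun_normI)
    show "continuous_on UNIV (\<lambda>t. g (max a (min b t)))"
      using ab by (intro continuous_on_compose2[OF g] continuous_intros) auto
    show "norm (g (max a (min b t))) \<le> B" for t
      using ab by (intro B) auto
  qed
qed

text \<open>Picard iteration in the Bielecki norm \<open>sup |u(t)| exp(-K|t|)\<close>: the weight turns the integral
  operator into a contraction on the whole interval, so no smallness condition on \<open>A\<close> is needed.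
  The unknown is written as \<open>x t = x0 + exp(K|t|) u t\<close> with \<open>u\<close> bounded continuous, and the operator
  is frozen outside \<open>[-A, A]\<close>.\<close>

lemma picard_lindeloef_lipschitz:
  fixes f :: "'a::euclidean_space \<Rightarrow> 'a"
  assumes lip: "L-lipschitz_on UNIV f" and A: "0 < A"
  obtains x where "x 0 = x0" "\<And>t. t \<in> {-A<..<A} \<Longrightarrow> (x has_vector_derivative f (x t)) (at t)"
proof -
  have L: "0 \<le> L"
    using lipschitz_on_nonneg[OF lip] .
  define K where "K = 2 * (L + 1)"
  define w where "w s = exp (K * \<bar>s\<bar>)" for s
  define cl where "cl t = max (-A) (min A t)" for t
  define h where "h u s = f (x0 + w s *\<^sub>R apply_bcontfun u s)" for u :: "real \<Rightarrow>\<^sub>C 'a" and s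
  define I where "I u t = integral {-A..t} (h u) - integral {-A..0} (h u)" for u t
  define P where "P u = Bcontfun (\<lambda>t. (1 / w (cl t)) *\<^sub>R I u (cl t))" for u
  have K: "0 < K"
    using L by (simp add: K_def)
  have h_cont: "continuous_on S (h u)" for u S
    unfolding h_def w_def
    by (intro continuous_on_compose2[OF lipschitz_on_continuous_on[OF lip]] continuous_intros) auto
  have P_apply: "apply_bcontfun (P u) t = (1 / w (cl t)) *\<^sub>R I u (cl t)" for u t
  proof -
    have "continuous_on {-A..A} (\<lambda>\<tau>. (1 / w \<tau>) *\<^sub>R I u \<tau>)"
      unfolding I_def w_def
      by (intro continuous_intros indefinite_integral_continuous_1 integrable_continuous_real h_cont)
        auto
    from continuous_clamp_in_bcontfun[OF this] A show ?thesis
      by (simp add: P_def cl_def Bcontfun_inverse)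
  qed
  have "dist (P u) (P v) \<le> 1/2 * dist u v" for u v
  proof (rule dist_bound)
    fix t
    define \<tau> where "\<tau> = cl t"
    have \<tau>: "-A \<le> \<tau>"
      using A by (simp add: \<tau>_def cl_def)
    have yz: "dist (x0 + w s *\<^sub>R apply_bcontfun u s) (x0 + w s *\<^sub>R apply_bcontfun v s)
        \<le> dist u v * exp (K * \<bar>s\<bar>)" for s
    proof -
      have "dist (x0 + w s *\<^sub>R apply_bcontfun u s) (x0 + w s *\<^sub>R apply_bcontfun v s)
          = norm (w s *\<^sub>R (apply_bcontfun u s - apply_bcontfun v s))"
        by (simp add: dist_norm scaleR_diff_right)
      also have "\<dots> = w s * dist (apply_bcontfun u s) (apply_bcontfun v s)"
        by (simp add: dist_norm w_def)
      also have "\<dots> \<le> w s * dist u v"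
        by (rule mult_left_mono[OF dist_bounded]) (simp add: w_def)
      finally show ?thesis
        by (simp add: w_def mult.commute)
    qed
    have cont: "continuous_on UNIV (\<lambda>s. x0 + w s *\<^sub>R apply_bcontfun u' s)" for u'
      unfolding w_def by (intro continuous_intros) auto
    have I_diff: "norm (I u \<tau> - I v \<tau>) \<le> L * dist u v * w \<tau> / K"
      using norm_integral_lipschitz_diff_le[OF lip K cont cont yz, of "-A" \<tau>] A \<tau>
      by (simp add: I_def h_def[abs_def] w_def)
    have "dist (apply_bcontfun (P u) t) (apply_bcontfun (P v) t) = norm ((1 / w \<tau>) *\<^sub>R (I u \<tau> - I v \<tau>))"
      by (simp add: P_apply dist_norm scaleR_diff_right \<tau>_def)
    also have "\<dots> = (1 / w \<tau>) * norm (I u \<tau> - I v \<tau>)"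
      by (simp add: w_def)
    also have "\<dots> \<le> (1 / w \<tau>) * (L * dist u v * w \<tau> / K)"
      using I_diff by (intro mult_left_mono) (simp_all add: w_def)
    also have "\<dots> = L * dist u v / K"
      by (simp add: w_def)
    also have "\<dots> \<le> 1/2 * dist u v"
      using L by (simp add: K_def field_simps)
    finally show "dist (apply_bcontfun (P u) t) (apply_bcontfun (P v) t) \<le> 1/2 * dist u v" .
  qed
  then obtain u where u: "P u = u"
    using banach_fix_type[of "1/2" P] by auto
  define x where "x t = x0 + w t *\<^sub>R apply_bcontfun u t" for t
  have x_eq: "x t = (x0 - integral {-A..0} (\<lambda>s. f (x s))) + integral {-A..t} (\<lambda>s. f (x s))"
    if "t \<in> {-A..A}" for t
  proof -
    have "apply_bcontfun u t = (1 / w t) *\<^sub>R I u t"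
      using P_apply[of u t] u that by (simp add: cl_def)
    then show ?thesis
      by (simp add: x_def I_def h_def[abs_def] w_def)
  qed
  show ?thesis
  proof (rule that)
    show "x 0 = x0"
      using x_eq[of 0] A by simp
    have "continuous_on {-A..A} (\<lambda>s. f (x s))"
      using h_cont[of "{-A..A}" u] by (simp add: h_def[abs_def] x_def)
    then show "(x has_vector_derivative f (x t)) (at t)" if "t \<in> {-A<..<A}" for t
      using integral_equation_has_vector_derivative[OF _ x_eq that] by blast
  qed
qed

definition cutoff :: "real \<Rightarrow> wh_state \<Rightarrow> real" where
  "cutoff R x = max 0 (min 1 (R - norm x))"

lemma cutoff_field_lipschitz:
  assumes R: "0 \<le> R"
  obtains K where "K-lipschitz_on UNIV (\<lambda>x. cutoff R x *\<^sub>R wh_field x)"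
proof -
  let ?p = "closest_point (cball (0::wh_state) R)"
  have ne: "cball (0::wh_state) R \<noteq> {}"
    using R by auto
  have p_lip: "1-lipschitz_on UNIV ?p"
    by (rule lipschitz_onI) (auto intro: closest_point_lipschitz[OF convex_cball closed_cball ne])
  have p_in: "?p x \<in> cball 0 R" for x
    by (rule closest_point_in_set[OF closed_cball ne])
  obtain L where L: "L-lipschitz_on (cball 0 R) wh_field"
    using wh_field_lipschitz_on_bounded[OF bounded_cball] .
  then have field_p_lip: "(L * 1)-lipschitz_on UNIV (\<lambda>x. wh_field (?p x))"
    using p_in by (intro lipschitz_on_compose2[OF p_lip] lipschitz_on_subset[OF L]) auto
  have "bounded (wh_field ` cball 0 R)"
    by (intro compact_imp_bounded compact_continuous_image lipschitz_on_continuous_on[OF L] compact_cball)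
  then obtain M where M: "\<And>y. y \<in> cball 0 R \<Longrightarrow> norm (wh_field y) \<le> M" "0 \<le> M"
    unfolding bounded_iff by (metis image_eqI norm_ge_zero order_trans p_in)
  have cutoff_lip: "1-lipschitz_on UNIV (cutoff R)"
  proof (rule lipschitz_onI)
    fix x y :: wh_state
    have "\<bar>norm x - norm y\<bar> \<le> dist x y"
      by (simp add: dist_norm norm_triangle_ineq3)
    then show "dist (cutoff R x) (cutoff R y) \<le> 1 * dist x y"
      by (simp add: cutoff_def dist_real_def)
  qed simp
  have "(1 * (L * 1) + M * 1)-lipschitz_on UNIV (\<lambda>x. cutoff R x *\<^sub>R wh_field (?p x))"
    by (rule lipschitz_on_scaleR_bounded[OF cutoff_lip _ field_p_lip])
      (use M p_in in \<open>auto simp: cutoff_def\<close>)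
  moreover have "cutoff R x *\<^sub>R wh_field (?p x) = cutoff R x *\<^sub>R wh_field x" for x
    by (cases "x \<in> cball 0 R") (auto simp: closest_point_self cutoff_def)
  ultimately show ?thesis
    using that by simp
qed

lemma wh_local_existence:
  assumes adm: "wh_admissible x0" and A: "0 < A"
  obtains \<phi> where "\<phi> 0 = x0" "wh_solution_on {-A<..<A} \<phi>"
proof -
  define B where "B = sqrt (1 + N_norm_sq x0 * exp (12 * A))"
  have B: "0 \<le> B"
    using N_norm_sq_nonneg[of x0] by (simp add: B_def)
  obtain K where "K-lipschitz_on UNIV (\<lambda>x. cutoff (B + 1) x *\<^sub>R wh_field x)"
    using cutoff_field_lipschitz[of "B + 1"] B by auto
  from picard_lindeloef_lipschitz[OF this A] obtain \<phi> where \<phi>0: "\<phi> 0 = x0"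
    and \<phi>: "\<And>t. t \<in> {-A<..<A} \<Longrightarrow>
      (\<phi> has_vector_derivative cutoff (B + 1) (\<phi> t) *\<^sub>R wh_field (\<phi> t)) (at t)"
    by blast
  have "cutoff (B + 1) (\<phi> t) = 1" if t: "t \<in> {-A<..<A}" for t
  proof -
    have "cutoff (B + 1) (\<phi> r) \<in> {0..1} \<and>
        (\<phi> has_vector_derivative cutoff (B + 1) (\<phi> r) *\<^sub>R wh_field (\<phi> r)) (at r)"
      if "r \<in> {-\<bar>t\<bar>..\<bar>t\<bar>}" for r
    proof -
      have "r \<in> {-A<..<A}"
        using t that by auto
      with \<phi> show ?thesis
        by (simp add: cutoff_def)
    qed
    then have "time_changed_solution_on (\<lambda>t. cutoff (B + 1) (\<phi> t)) {-\<bar>t\<bar>..\<bar>t\<bar>} \<phi>"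
      by (simp add: time_changed_solution_on_def)
    from time_changed_norm_bound[OF this _ mem_abs_interval adm[folded \<phi>0]]
    have "(norm (\<phi> t))\<^sup>2 \<le> 1 + N_norm_sq x0 * exp (12 * \<bar>t\<bar>)"
      using \<phi>0 by simp
    also have "\<dots> \<le> 1 + N_norm_sq x0 * exp (12 * A)"
      using t N_norm_sq_nonneg[of x0] by (intro add_left_mono mult_left_mono) auto
    finally have "norm (\<phi> t) \<le> B"
      by (simp add: B_def real_le_rsqrt)
    then show ?thesis
      by (simp add: cutoff_def)
  qed
  with \<phi> have "wh_solution_on {-A<..<A} \<phi>"
    by (simp add: wh_solution_on_def)
  with \<phi>0 show ?thesis
    using that by blast
qed

lemma wh_global_existence:
  assumes adm: "wh_admissible x0"
  obtains \<phi> where "wh_solution \<phi>" "\<phi> 0 = x0"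
proof -
  have "\<exists>\<phi>. \<phi> 0 = x0 \<and> wh_solution_on {-(real n + 1)<..<real n + 1} \<phi>" for n :: nat
    using wh_local_existence[OF adm, of "real n + 1"] by auto
  then obtain X where X0: "\<And>n. X n 0 = x0"
    and X: "\<And>n. wh_solution_on {-(real n + 1)<..<real n + 1} (X n)"
    by metis
  have agree: "X m s = X n s" if "\<bar>s\<bar> < real m + 1" "\<bar>s\<bar> < real n + 1" for m n s
  proof -
    have "wh_solution_on {-\<bar>s\<bar>..\<bar>s\<bar>} (X m)" "wh_solution_on {-\<bar>s\<bar>..\<bar>s\<bar>} (X n)"
      using that by (auto intro: wh_solution_on_subset[OF X])
    from wh_solution_on_unique[OF this _ mem_abs_interval, of 0] show ?thesis
      using X0 by simp
  qed
  define \<phi> where "\<phi> t = X (nat \<lceil>\<bar>t\<bar>\<rceil>) t" for t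
  have ceiling: "\<bar>r\<bar> \<le> real (nat \<lceil>\<bar>r\<bar>\<rceil>)" for r :: real
    by linarith
  have "(\<phi> has_vector_derivative wh_field (\<phi> t)) (at t)" for t
  proof -
    define m where "m = nat \<lceil>\<bar>t\<bar>\<rceil>"
    define S where "S = {-(real m + 1)<..<real m + 1}"
    have "\<bar>t\<bar> \<le> real m"
      unfolding m_def by (rule ceiling)
    then have t: "t \<in> S"
      by (auto simp: S_def abs_le_iff)
    have "\<phi> s = X m s" if "s \<in> S" for s
    proof -
      have "\<bar>s\<bar> < real (nat \<lceil>\<bar>s\<bar>\<rceil>) + 1"
        using ceiling[of s] by linarith
      moreover have "\<bar>s\<bar> < real m + 1"
        using that by (auto simp: S_def)
      ultimately show ?thesis
        unfolding \<phi>_def by (rule agree)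
    qed
    moreover have "(X m has_vector_derivative wh_field (X m t)) (at t)"
      using X[of m] t by (simp add: wh_solution_on_def S_def)
    ultimately show ?thesis
      using has_vector_derivative_transform_within_open[of "X m" _ t S \<phi>] t
      by (simp add: S_def)
  qed
  then have "wh_solution \<phi>"
    by (simp add: wh_solution_def)
  moreover have "\<phi> 0 = x0"
    using X0 by (simp add: \<phi>_def)
  ultimately show ?thesis
    by (rule that)
qed

lemma Phi_wh_solution:
  assumes "wh_solution \<phi>"
  shows "Phi \<tau> (\<phi> 0) = \<phi> \<tau>"
proof -
  have "\<psi> = \<phi>" if "wh_solution \<psi>" "\<psi> 0 = \<phi> 0" for \<psi>
  proof
    fix t
    have "wh_solution_on {-\<bar>t\<bar>..\<bar>t\<bar>} \<psi>" "wh_solution_on {-\<bar>t\<bar>..\<bar>t\<bar>} \<phi>"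
      using that(1) assms by (simp_all add: wh_solution_imp_solution_on)
    from wh_solution_on_unique[OF this _ mem_abs_interval, of 0] show "\<psi> t = \<phi> t"
      using that(2) by simp
  qed
  then have "(THE \<psi>. wh_solution \<psi> \<and> \<psi> 0 = \<phi> 0) = \<phi>"
    using assms by (intro the_equality) auto
  then show ?thesis
    by (simp add: Phi_def)
qed

lemma wh_solution_shift:
  assumes "wh_solution \<phi>"
  shows "wh_solution (\<lambda>t. \<phi> (t + T))"
  unfolding wh_solution_def
proof
  fix t
  have "((\<lambda>t. t + T) has_vector_derivative 1) (at t)"
    by (auto intro!: derivative_eq_intros simp flip: has_real_derivative_iff_has_vector_derivative)
  moreover have "(\<phi> has_vector_derivative wh_field (\<phi> (t + T))) (at (t + T))"
    using assms by (simp add: wh_solution_def)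
  ultimately show "((\<lambda>t. \<phi> (t + T)) has_vector_derivative wh_field (\<phi> (t + T))) (at t)"
    using vector_diff_chain_at by (fastforce simp: o_def)
qed

section \<open>The symmetric Bianchi \<open>VI\<^sub>0\<close> orbit\<close>

text \<open>The symmetry \<open>N \<mapsto> -N\<close> composed with the symmetry exchanging \<open>N\<^sub>2\<close> and \<open>N\<^sub>3\<close> and
  reversing \<open>\<Sigma>\<^sub>-\<close>; its fixed points form the set \<open>\<Sigma>\<^sub>- = N\<^sub>1 = 0, N\<^sub>3 = -N\<^sub>2\<close>.\<close>

definition wh_reflect :: "wh_state \<Rightarrow> wh_state" where
  "wh_reflect x = (Sp x, - Sm x, - N1 x, - N3 x, - N2 x)"

lemma wh_field_reflect: "wh_field (wh_reflect x) = wh_reflect (wh_field x)"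
  by (rule state_eqI) (simp_all add: wh_reflect_def wh_field_coords rate1_def rate2_def rate3_def
      wh_Splus_def wh_Sminus_def wh_q_def field_simps)

lemma wh_solution_reflect:
  assumes "wh_solution \<psi>"
  shows "wh_solution (\<lambda>t. wh_reflect (\<psi> t))"
  unfolding wh_solution_def
proof
  fix t
  have "(\<psi> has_vector_derivative wh_field (\<psi> t)) (at t)"
    using assms by (simp add: wh_solution_def)
  note coords = has_real_derivative_coords[OF this, unfolded has_real_derivative_iff_has_vector_derivative]
  have "((\<lambda>t. wh_reflect (\<psi> t)) has_vector_derivative wh_reflect (wh_field (\<psi> t))) (at t)"
    unfolding wh_reflect_def
    by (intro has_vector_derivative_Pair coords has_vector_derivative_minus)
  then show "((\<lambda>t. wh_reflect (\<psi> t)) has_vector_derivative wh_field (wh_reflect (\<psi> t))) (at t)"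
    by (simp add: wh_field_reflect)
qed

lemma bianchi_VIII_sgn_cong:
  assumes "sgn (N1 x) = sgn (N1 y)" "sgn (N2 x) = sgn (N2 y)" "sgn (N3 x) = sgn (N3 y)"
  shows "bianchi_VIII x \<longleftrightarrow> bianchi_VIII y"
proof -
  have "N1 x \<noteq> 0 \<longleftrightarrow> N1 y \<noteq> 0" "N2 x \<noteq> 0 \<longleftrightarrow> N2 y \<noteq> 0" "N3 x \<noteq> 0 \<longleftrightarrow> N3 y \<noteq> 0"
    using assms by (metis sgn_0_0)+
  with assms show ?thesis
    by (subst (1 2) state_eq_coords) (simp add: bianchi_VIII_def)
qed

lemma wh_solution_invariants:
  assumes "wh_solution \<phi>"
  shows "sgn (N1 (\<phi> t)) = sgn (N1 (\<phi> 0))" "sgn (N2 (\<phi> t)) = sgn (N2 (\<phi> 0))"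
    "sgn (N3 (\<phi> t)) = sgn (N3 (\<phi> 0))" "wh_admissible (\<phi> 0) \<Longrightarrow> wh_admissible (\<phi> t)"
proof -
  have sol: "time_changed_solution_on (\<lambda>_. 1) {-\<bar>t\<bar>..\<bar>t\<bar>} \<phi>"
    using assms by (intro wh_solution_on_time_changed wh_solution_imp_solution_on)
  have 0: "0 \<in> {-\<bar>t\<bar>..\<bar>t\<bar>}"
    by simp
  show "sgn (N1 (\<phi> t)) = sgn (N1 (\<phi> 0))" "sgn (N2 (\<phi> t)) = sgn (N2 (\<phi> 0))"
    "sgn (N3 (\<phi> t)) = sgn (N3 (\<phi> 0))"
    using time_changed_sgn_invariants[OF sol 0 mem_abs_interval] by simp_all
  show "wh_admissible (\<phi> 0) \<Longrightarrow> wh_admissible (\<phi> t)"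
    using time_changed_admissible[OF sol 0 mem_abs_interval] .
qed

definition vi0_point :: wh_state where
  "vi0_point = (0, 0, 0, 1 / sqrt 3, - 1 / sqrt 3)"

definition taub_point :: wh_state where
  "taub_point = (-1, 0, 0, 0, 0)"

lemma vi0_point_admissible: "wh_admissible vi0_point"
  by (simp add: wh_admissible_def wh_constraint_def vi0_point_def power_divide)

lemma vi0_orbit_symmetric:
  assumes \<psi>: "wh_solution \<psi>" "\<psi> 0 = vi0_point"
  shows "\<psi> t = (Sp (\<psi> t), 0, 0, N2 (\<psi> t), - N2 (\<psi> t))" "(Sp (\<psi> t))\<^sup>2 + 3 * (N2 (\<psi> t))\<^sup>2 = 1"
proof -
  have "wh_reflect (\<psi> 0) = \<psi> 0"
    using \<psi>(2) by (simp add: wh_reflect_def vi0_point_def)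
  then have reflect: "wh_reflect (\<psi> t) = \<psi> t"
    using Phi_wh_solution[OF wh_solution_reflect[OF \<psi>(1)]] Phi_wh_solution[OF \<psi>(1)] by metis
  have "Sm (\<psi> t) = 0" "N1 (\<psi> t) = 0" "N3 (\<psi> t) = - N2 (\<psi> t)"
    using arg_cong[OF reflect, of Sm] arg_cong[OF reflect, of N1] arg_cong[OF reflect, of N3]
    by (simp_all add: wh_reflect_def)
  then show eq: "\<psi> t = (Sp (\<psi> t), 0, 0, N2 (\<psi> t), - N2 (\<psi> t))"
    by (intro state_eqI) simp_all
  have "wh_constraint (\<psi> t)"
    using wh_solution_invariants(4)[OF \<psi>(1)] vi0_point_admissible \<psi>(2) by (simp add: wh_admissible_def)
  then have "wh_constraint (Sp (\<psi> t), 0, 0, N2 (\<psi> t), - N2 (\<psi> t))"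
    by (subst (asm) eq)
  then show "(Sp (\<psi> t))\<^sup>2 + 3 * (N2 (\<psi> t))\<^sup>2 = 1"
    by (simp add: wh_constraint_def power2_eq_square algebra_simps)
qed

lemma vi0_orbit_Sp_has_derivative:
  assumes \<psi>: "wh_solution \<psi>" "\<psi> 0 = vi0_point"
  shows "((\<lambda>t. Sp (\<psi> t)) has_real_derivative - 2 * (1 - Sp (\<psi> t)) * (1 + Sp (\<psi> t))\<^sup>2) (at t)"
proof -
  obtain s n where eq: "\<psi> t = (s, 0, 0, n, - n)" and "s\<^sup>2 + 3 * n\<^sup>2 = 1"
    using vi0_orbit_symmetric[OF \<psi>, of t] by metis
  then have constraint: "3 * n\<^sup>2 = 1 - s\<^sup>2"
    by simp
  have "Sp (wh_field (\<psi> t)) = - (2 - 2 * s\<^sup>2) * s - 2 * (3 * n\<^sup>2)"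
    by (simp add: eq wh_field_def wh_q_def wh_Splus_def power2_eq_square algebra_simps)
  also have "\<dots> = - 2 * (1 - s) * (1 + s)\<^sup>2"
    unfolding constraint by (simp add: power2_eq_square algebra_simps)
  finally have field: "Sp (wh_field (\<psi> t)) = - 2 * (1 - s) * (1 + s)\<^sup>2" .
  have "(\<psi> has_vector_derivative wh_field (\<psi> t)) (at t)"
    using \<psi>(1) by (simp add: wh_solution_def)
  from has_real_derivative_coords(1)[OF this] show ?thesis
    unfolding field by (simp add: eq)
qed

lemma vi0_orbit_Sp_bounds:
  assumes \<psi>: "wh_solution \<psi>" "\<psi> 0 = vi0_point"
  shows "-1 \<le> Sp (\<psi> t)" "Sp (\<psi> t) \<le> 1"
  using vi0_orbit_symmetric(2)[OF \<psi>, of t] zero_le_power2[of "N2 (\<psi> t)"] abs_square_le_1[of "Sp (\<psi> t)"]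
  by linarith+

lemma vi0_orbit_Sp_nonpos:
  assumes \<psi>: "wh_solution \<psi>" "\<psi> 0 = vi0_point" and t: "0 \<le> t"
  shows "Sp (\<psi> t) \<le> 0"
proof -
  have "Sp (\<psi> t) \<le> Sp (\<psi> 0)"
  proof (rule DERIV_nonpos_imp_nonincreasing[OF t])
    fix r
    have "- 2 * (1 - Sp (\<psi> r)) * (1 + Sp (\<psi> r))\<^sup>2 \<le> 0"
      using vi0_orbit_Sp_bounds[OF \<psi>, of r] by (intro mult_nonpos_nonneg) auto
    with vi0_orbit_Sp_has_derivative[OF \<psi>, of r]
    show "\<exists>y. ((\<lambda>t. Sp (\<psi> t)) has_real_derivative y) (at r) \<and> y \<le> 0"
      by blast
  qed
  then show ?thesis
    using \<psi>(2) by (simp add: vi0_point_def)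
qed

text \<open>While \<open>\<Sigma>\<^sub>+ \<in> (-1 + \<eta>, 0]\<close>, it decreases at rate at least \<open>2\<eta>\<^sup>2\<close>, so it cannot stay above
  \<open>-1 + \<eta>\<close> up to time \<open>1/\<eta>\<^sup>2\<close>.\<close>

lemma vi0_orbit_reaches_taub_level:
  assumes \<psi>: "wh_solution \<psi>" "\<psi> 0 = vi0_point" and \<eta>: "0 < \<eta>" "\<eta> < 1"
  obtains T where "0 < T" "Sp (\<psi> T) \<le> -1 + \<eta>"
proof -
  let ?s = "\<lambda>t. Sp (\<psi> t)"
  note deriv = vi0_orbit_Sp_has_derivative[OF \<psi>]
  define T0 where "T0 = 1 / \<eta>\<^sup>2"
  have "\<exists>T\<in>{0..T0}. ?s T \<le> -1 + \<eta>"
  proof (rule ccontr)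
    assume "\<not> ?thesis"
    then have above: "-1 + \<eta> < ?s t" if "t \<in> {0..T0}" for t
      using that by (meson not_le)
    have "?s T0 + 2 * \<eta>\<^sup>2 * T0 \<le> ?s 0 + 2 * \<eta>\<^sup>2 * 0"
    proof (rule DERIV_nonpos_imp_nonincreasing[where f = "\<lambda>t. ?s t + 2 * \<eta>\<^sup>2 * t"])
      fix t assume t: "0 \<le> t" "t \<le> T0"
      have "\<eta>\<^sup>2 \<le> (1 + ?s t)\<^sup>2"
        using above[of t] t \<eta> by (intro power_mono) auto
      moreover have "1 \<le> 1 - ?s t"
        using vi0_orbit_Sp_nonpos[OF \<psi>, of t] t by simp
      ultimately have "\<eta>\<^sup>2 \<le> (1 - ?s t) * (1 + ?s t)\<^sup>2"
        using mult_mono[of 1 "1 - ?s t" "\<eta>\<^sup>2" "(1 + ?s t)\<^sup>2"] by simp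
      then have "- 2 * (1 - ?s t) * (1 + ?s t)\<^sup>2 + 2 * \<eta>\<^sup>2 \<le> 0"
        using mult.assoc[of "-2" "1 - ?s t" "(1 + ?s t)\<^sup>2"] by linarith
      moreover have "((\<lambda>t. ?s t + 2 * \<eta>\<^sup>2 * t) has_real_derivative
          - 2 * (1 - ?s t) * (1 + ?s t)\<^sup>2 + 2 * \<eta>\<^sup>2) (at t)"
        using DERIV_add[OF deriv[of t] DERIV_cmult_Id[of "2 * \<eta>\<^sup>2"]] by simp
      ultimately show "\<exists>y. ((\<lambda>t. ?s t + 2 * \<eta>\<^sup>2 * t) has_real_derivative y) (at t) \<and> y \<le> 0"
        by blast
    qed (use \<eta> in \<open>simp add: T0_def\<close>)
    then show False
      using vi0_orbit_Sp_bounds[OF \<psi>, of T0] \<psi>(2) \<eta> by (simp add: T0_def vi0_point_def)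
  qed
  then obtain T where T: "T \<in> {0..T0}" "?s T \<le> -1 + \<eta>"
    by blast
  moreover have "T \<noteq> 0"
    using T \<psi>(2) \<eta> by (auto simp: vi0_point_def)
  ultimately have "0 < T"
    by simp
  from this T(2) show ?thesis
    by (rule that)
qed

lemma vi0_orbit_approaches_taub_point:
  assumes \<psi>: "wh_solution \<psi>" "\<psi> 0 = vi0_point" and e: "0 < e"
  obtains T where "0 < T" "dist (\<psi> T) taub_point < e"
proof -
  define \<eta> where "\<eta> = min (1/2) (e\<^sup>2 / 4)"
  have \<eta>: "0 < \<eta>" "\<eta> \<le> 1/2" "\<eta> \<le> e\<^sup>2 / 4"
    using e by (auto simp: \<eta>_def)
  obtain T where T: "0 < T" "Sp (\<psi> T) \<le> -1 + \<eta>"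
    using vi0_orbit_reaches_taub_level[OF \<psi>, of \<eta>] \<eta> by auto
  obtain s n where eq: "\<psi> T = (s, 0, 0, n, - n)" and "s\<^sup>2 + 3 * n\<^sup>2 = 1"
    using vi0_orbit_symmetric[OF \<psi>, of T] by (rule that)
  then have constraint: "3 * n\<^sup>2 = (1 - s) * (1 + s)"
    by (simp add: power2_eq_square algebra_simps)
  have "0 \<le> (1 - s) * (1 + s)"
    using constraint zero_le_power2[of n] by linarith
  moreover have "s \<le> -1 + \<eta>"
    using T(2) by (simp add: eq)
  ultimately have s: "0 \<le> 1 + s" "1 + s \<le> \<eta>" "1 - s \<le> 2"
    using \<eta> by (auto simp: zero_le_mult_iff)
  have "(dist (\<psi> T) taub_point)\<^sup>2 = (1 + s)\<^sup>2 + 2 * n\<^sup>2"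
    unfolding dist_norm norm_state_sq eq taub_point_def by (simp add: algebra_simps)
  also have "\<dots> = (1 + s)\<^sup>2 + 2 / 3 * ((1 - s) * (1 + s))"
    unfolding constraint[symmetric] by simp
  also have "\<dots> \<le> \<eta>\<^sup>2 + 2 / 3 * (2 * \<eta>)"
  proof -
    have "(1 + s)\<^sup>2 \<le> \<eta>\<^sup>2"
      using s by (intro power_mono) auto
    moreover have "(1 - s) * (1 + s) \<le> 2 * \<eta>"
      using s by (intro mult_mono) auto
    ultimately show ?thesis
      by linarith
  qed
  also have "\<dots> < e\<^sup>2"
  proof -
    have "\<eta>\<^sup>2 \<le> \<eta> / 2"
      using \<eta> by (simp add: power2_eq_square mult_left_le)
    then show ?thesis
      using \<eta> e by simp
  qed
  finally have "dist (\<psi> T) taub_point < e"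
    by (rule power2_less_imp_less) (use e in auto)
  with T(1) show ?thesis
    by (rule that)
qed

section \<open>Perturbation to Bianchi VIII\<close>

lemma N_norm_sq_vi0_point: "N_norm_sq vi0_point = 2 / 3"
  by (simp add: N_norm_sq_def vi0_point_def power_divide)

lemma taub_point_in_kasner_circle: "taub_point \<in> kasner_circle"
  by (simp add: taub_point_def kasner_circle_def)

text \<open>Switching on \<open>N\<^sub>1 = \<delta>\<close> while shifting \<open>N\<^sub>2, N\<^sub>3\<close> by \<open>\<delta>/4\<close> keeps the constraint exact:
  the quadratic form of the \<open>N\<^sub>i\<close> stays equal to \<open>4/3\<close>.\<close>

definition perturbed_vi0_point :: "real \<Rightarrow> wh_state" where
  "perturbed_vi0_point \<delta> = (0, 0, \<delta>, 1 / sqrt 3 + \<delta> / 4, - (1 / sqrt 3 - \<delta> / 4))"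

lemma perturbed_vi0_point:
  assumes \<delta>: "0 < \<delta>" "\<delta> \<le> 1/2"
  defines "x \<equiv> perturbed_vi0_point \<delta>"
  shows "wh_admissible x" "bianchi_VIII x" "N_norm_sq x \<le> 2" "dist x vi0_point \<le> 2 * \<delta>"
    "\<bar>N1 x * N2 x\<bar> + \<bar>N2 x * N3 x\<bar> + \<bar>N3 x * N1 x\<bar> \<ge> 1/4"
proof -
  define r where "r = 1 / sqrt 3"
  have r2: "r\<^sup>2 = 1/3"
    by (simp add: r_def power_divide)
  have "(1/2)\<^sup>2 < r\<^sup>2"
    unfolding r2 by (simp add: power_divide)
  then have r: "1/2 < r"
    by (rule power2_less_imp_less) (simp add: r_def)
  have x: "x = (0, 0, \<delta>, r + \<delta> / 4, - (r - \<delta> / 4))"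
    by (simp add: x_def perturbed_vi0_point_def r_def)
  have vi0: "vi0_point = (0, 0, 0, r, - r)"
    by (simp add: vi0_point_def r_def)
  have \<delta>2: "\<delta>\<^sup>2 \<le> 1/4"
    using power_mono[of \<delta> "1/2" 2] \<delta> by (simp add: power_divide)
  have n_form: "n_form x = 4 * r\<^sup>2"
    by (simp add: x n_form_def power2_eq_square field_simps)
  have "\<delta> / 4 - r \<le> 0"
    using r \<delta> by simp
  then have "(\<delta> / 4 - r) * \<delta> \<le> 0" "(\<delta> / 4 - r) * (r + \<delta> / 4) \<le> 0"
    using r \<delta> by (simp_all add: mult_nonpos_nonneg)
  with n_form show "wh_admissible x"
    unfolding wh_admissible_def wh_constraint_iff_defect constraint_defect_def by (simp add: x r2)
  show "bianchi_VIII x"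
    using r \<delta> by (simp add: x bianchi_VIII_def)
  have "N_norm_sq x = \<delta>\<^sup>2 * 9 / 8 + 2 * r\<^sup>2"
    by (simp add: x N_norm_sq_def power2_eq_square field_simps)
  then show "N_norm_sq x \<le> 2"
    using \<delta>2 r2 by simp
  have "(dist x vi0_point)\<^sup>2 = \<delta>\<^sup>2 * 9 / 8"
    unfolding dist_norm norm_state_sq x vi0 by (simp add: power2_eq_square field_simps)
  also have "\<dots> \<le> (2 * \<delta>)\<^sup>2"
    by (simp add: power2_eq_square)
  finally show "dist x vi0_point \<le> 2 * \<delta>"
    by (rule power2_le_imp_le) (use \<delta> in simp)
  have "0 < (r + \<delta> / 4) * (r - \<delta> / 4)"
    using r \<delta> by simp
  moreover have "N2 x * N3 x = - ((r + \<delta> / 4) * (r - \<delta> / 4))"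
    by (simp add: x algebra_simps)
  ultimately have "\<bar>N2 x * N3 x\<bar> = (r + \<delta> / 4) * (r - \<delta> / 4)"
    by (simp only: abs_minus_cancel abs_of_pos)
  also have "\<dots> = r\<^sup>2 - \<delta>\<^sup>2 / 16"
    by (simp add: power2_eq_square algebra_simps)
  finally have "1/4 \<le> \<bar>N2 x * N3 x\<bar>"
    using \<delta>2 r2 by simp
  also have "\<dots> \<le> \<bar>N1 x * N2 x\<bar> + \<bar>N2 x * N3 x\<bar> + \<bar>N3 x * N1 x\<bar>"
    by simp
  finally show "\<bar>N1 x * N2 x\<bar> + \<bar>N2 x * N3 x\<bar> + \<bar>N3 x * N1 x\<bar> \<ge> 1/4" .
qed

lemma perturbed_vi0_orbit_near_taub_point:
  assumes "0 < \<epsilon>"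
  obtains \<delta> T \<phi> where "0 < \<delta>" "\<delta> \<le> 1/2" "0 < T" "wh_solution \<phi>"
    "\<phi> 0 = perturbed_vi0_point \<delta>" "dist (\<phi> T) taub_point < \<epsilon>"
proof -
  obtain \<psi> where \<psi>: "wh_solution \<psi>" "\<psi> 0 = vi0_point"
    using wh_global_existence[OF vi0_point_admissible] by blast
  obtain T where T: "0 < T" "dist (\<psi> T) taub_point < \<epsilon> / 2"
    using vi0_orbit_approaches_taub_point[OF \<psi>, of "\<epsilon> / 2"] assms by auto
  obtain C where C: "\<And>\<phi> \<psi>. wh_solution \<phi> \<Longrightarrow> wh_solution \<psi> \<Longrightarrow>
    wh_admissible (\<phi> 0) \<Longrightarrow> wh_admissible (\<psi> 0) \<Longrightarrow> N_norm_sq (\<phi> 0) \<le> 2 \<Longrightarrow>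
    N_norm_sq (\<psi> 0) \<le> 2 \<Longrightarrow> norm (\<phi> T - \<psi> T) \<le> C * norm (\<phi> 0 - \<psi> 0)"
    using wh_solution_continuous_dependence[where T = T and B = 2] T(1) by auto
  define \<delta> where "\<delta> = min (1/2) (\<epsilon> / (4 * (\<bar>C\<bar> + 1)))"
  have \<delta>: "0 < \<delta>" "\<delta> \<le> 1/2"
    using assms by (simp add: \<delta>_def) (simp only: \<delta>_def min.cobounded1)
  have "\<delta> \<le> \<epsilon> / (4 * (\<bar>C\<bar> + 1))"
    unfolding \<delta>_def by (rule min.cobounded2)
  moreover have "0 < 4 * (\<bar>C\<bar> + 1)"
    by simp
  ultimately have "4 * (\<bar>C\<bar> + 1) * \<delta> \<le> \<epsilon>"
    by (simp add: le_divide_eq mult.commute)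
  then have \<delta>C: "(\<bar>C\<bar> + 1) * (2 * \<delta>) \<le> \<epsilon> / 2"
    by (simp add: algebra_simps)
  note x = perturbed_vi0_point[OF \<delta>]
  obtain \<phi> where \<phi>: "wh_solution \<phi>" "\<phi> 0 = perturbed_vi0_point \<delta>"
    using wh_global_existence[OF x(1)] by blast
  have "norm (\<phi> T - \<psi> T) \<le> C * dist (perturbed_vi0_point \<delta>) vi0_point"
    using C[OF \<phi>(1) \<psi>(1)] x(1,3) \<phi>(2) \<psi>(2) vi0_point_admissible N_norm_sq_vi0_point
    by (simp add: dist_norm)
  also have "\<dots> \<le> (\<bar>C\<bar> + 1) * dist (perturbed_vi0_point \<delta>) vi0_point"
    by (rule mult_right_mono) auto
  also have "\<dots> \<le> (\<bar>C\<bar> + 1) * (2 * \<delta>)"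
    using x(4) by (rule mult_left_mono) simp
  finally have "dist (\<phi> T) taub_point < \<epsilon>"
    using dist_triangle[of "\<phi> T" taub_point "\<psi> T"] T(2) \<delta>C by (simp add: dist_norm)
  with \<delta> T(1) \<phi> show ?thesis
    by (rule that)
qed

theorem mainTheorem6:
  fixes \<epsilon> :: real
  assumes "\<epsilon> > 0"
  shows "\<exists>(y :: wh_state) (T :: real).
           bianchi_VIII y \<and> wh_constraint y \<and> infdist y kasner_circle < \<epsilon> \<and> T > 0 \<and>
           (case Phi (-T) y of (sp, sm, n1, n2, n3) \<Rightarrow>
              bianchi_VIII (sp, sm, n1, n2, n3) \<and>
              \<bar>n1 * n2\<bar> + \<bar>n2 * n3\<bar> + \<bar>n3 * n1\<bar> \<ge> 1/4)"
proof -
  obtain \<delta> T \<phi> where \<delta>: "0 < \<delta>" "\<delta> \<le> 1/2" and T: "0 < T" and \<phi>: "wh_solution \<phi>"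
    "\<phi> 0 = perturbed_vi0_point \<delta>" and near: "dist (\<phi> T) taub_point < \<epsilon>"
    by (rule perturbed_vi0_orbit_near_taub_point[OF assms])
  note x = perturbed_vi0_point[OF \<delta>]
  have inf: "infdist (\<phi> T) kasner_circle < \<epsilon>"
    using infdist_le[OF taub_point_in_kasner_circle, of "\<phi> T"] near by linarith
  have VIII: "bianchi_VIII (\<phi> T)" and constraint: "wh_constraint (\<phi> T)"
    using bianchi_VIII_sgn_cong[OF wh_solution_invariants(1-3)[OF \<phi>(1), of T]]
      wh_solution_invariants(4)[OF \<phi>(1), of T] x(1,2) \<phi>(2) by (simp_all add: wh_admissible_def)
  have "Phi (-T) (\<phi> T) = perturbed_vi0_point \<delta>"
    using Phi_wh_solution[OF wh_solution_shift[OF \<phi>(1), of T], of "-T"] \<phi>(2) by simp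
  then have backward: "case Phi (-T) (\<phi> T) of (sp, sm, n1, n2, n3) \<Rightarrow> bianchi_VIII (sp, sm, n1, n2, n3) \<and>
      \<bar>n1 * n2\<bar> + \<bar>n2 * n3\<bar> + \<bar>n3 * n1\<bar> \<ge> 1/4"
    using x(2,5) by (simp add: perturbed_vi0_point_def)
  show ?thesis
    by (intro exI[of _ "\<phi> T"] exI[of _ T] conjI VIII constraint inf T backward)
qed

end
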